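(* Let $A$ be either a complete filtered associative algebra or a complete filtered Lie algebra over a field $\mathbb{K}$ of characteristic zero, and let $P:A\to A$ be an idempotent linear map preserving the filtration; put $\tilde P:=\mathrm{id}_A-P$, $A_{1,-}:=P(A_1)$, $A_{1,+}:=\tilde P(A_1)$. Let $\chi$ (resp. $\tilde\chi$) be the BCH-recursion map $A_1\to A_1$ associated to $P$ (resp. to $\tilde P$). Then: (1) (Factorization) $C$ restricts to a bijection $C_-:A_{1,-}\times A_{1,+}\to A_1$; (2) (Formal uniformization) there exists a unique bijection $\Psi:A_{1,+}\times A_{1,-}\to A_{1,-}\times A_{1,+}$ such that for all $a=(a_+,a_-)\in A_{1,+}\times A_{1,-}$, $$\exp(a_+)\exp(a_-)=\exp\big(\pi_-(\Psi(a))\big)\exp\big(\pi_+(\Psi(a))\big),$$ where $\pi_\pm:A_{1,-}\times A_{1,+}\to A_{1,\pm}$ are the projections onto the factors; (3) the inverse of $C_-$ is $D_P(a)=\big(P(\chi(a)),\tilde P(\chi(a))\big)$, $a\in A_1$, and for $a=(a_+,a_-)\in A_{1,+}\times A_{1,-}$, $$\Psi(a)=\Big(P\big(\chi(C(a_+,a_-))\big),\,\tilde P\big(\chi(C(a_+,a_-))\big)\Big)=\Big(P\big(\chi\circ\tilde\chi^{-1}(a_++a_-)\big),\,\tilde P\big(\chi\circ\tilde\chi^{-1}(a_++a_-)\big)\Big).$$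
   Context: A complete filtered associative algebra is an associative algebra $A$ with a decreasing filtration $A=A_0\supseteq A_1\supseteq\cdots$ by subalgebras with $A_mA_n\subseteq A_{m+n}$ and $A\cong\varprojlim A/A_n$; a complete filtered Lie algebra is defined analogously with $[A_m,A_n]\subseteq A_{m+n}$. $\mathrm{BCH}(x,y)$ is the Baker--Campbell--Hausdorff Lie series defined by $\exp(x)\exp(y)=\exp(x+y+\mathrm{BCH}(x,y))$, and $C(u,v):=u+v+\mathrm{BCH}(u,v)$ for $u,v\in A_1$. In the Lie algebra case exponentials are taken in the completion of the universal enveloping algebra. For a filtration-preserving linear map $Q:A\to A$, the BCH-recursion map associated to $Q$ is the unique map $\chi_Q:A_1\to A_1$ with $\chi_Q(a)=a-\mathrm{BCH}\big(Q(\chi_Q(a)),(\mathrm{id}_A-Q)(\chi_Q(a))\big)$ for all $a\in A_1$ (obtained as the limit of the iteration starting at $a$); it is a bijection of $A_1$ with inverse $\chi_Q^{-1}(a)=C\big(Q(a),(\mathrm{id}_A-Q)(a)\big)$. Here $\chi=\chi_P$ and $\tilde\chi=\chi_{\tilde P}$. *)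

theory Defs
  imports Main
begin

definition K_vector_space :: "('k::field \<Rightarrow> 'a::ab_group_add \<Rightarrow> 'a) \<Rightarrow> bool" where
  "K_vector_space sm \<longleftrightarrow>
     (\<forall>c x y. sm c (x + y) = sm c x + sm c y) \<and>
     (\<forall>c d x. sm (c + d) x = sm c x + sm d x) \<and>
     (\<forall>c d x. sm c (sm d x) = sm (c * d) x) \<and>
     (\<forall>x. sm 1 x = x)"

text \<open>A decreasing filtration A = A_0 \<supseteq> A_1 \<supseteq> ... by K-subspaces, such that the canonical
  map A \<rightarrow> lim A/A_n is bijective (injective: Hausdorff; surjective: every compatible family of
  representatives is realised).\<close>

definition complete_filtration :: "('k::field \<Rightarrow> 'a::ab_group_add \<Rightarrow> 'a) \<Rightarrow> (nat \<Rightarrow> 'a set) \<Rightarrow> bool" where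
  "complete_filtration sm F \<longleftrightarrow>
     F 0 = UNIV \<and>
     (\<forall>n. F (Suc n) \<subseteq> F n) \<and>
     (\<forall>n. 0 \<in> F n \<and> (\<forall>x\<in>F n. \<forall>y\<in>F n. x + y \<in> F n) \<and> (\<forall>c. \<forall>x\<in>F n. sm c x \<in> F n)) \<and>
     (\<Inter>n. F n) = {0} \<and>
     (\<forall>s. (\<forall>n. s (Suc n) - s n \<in> F n) \<longrightarrow> (\<exists>x. \<forall>n. x - s n \<in> F n))"

text \<open>Complete filtered associative K-algebra (not necessarily unital): 'a is a ring.\<close>

definition complete_filtered_assoc_algebra ::
  "('k::field \<Rightarrow> 'a::ring \<Rightarrow> 'a) \<Rightarrow> (nat \<Rightarrow> 'a set) \<Rightarrow> bool" where
  "complete_filtered_assoc_algebra sm F \<longleftrightarrow>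
     K_vector_space sm \<and>
     (\<forall>c x y. sm c (x * y) = sm c x * y \<and> sm c (x * y) = x * sm c y) \<and>
     complete_filtration sm F \<and>
     (\<forall>m n. \<forall>x\<in>F m. \<forall>y\<in>F n. x * y \<in> F (m + n))"

definition complete_filtered_Lie_algebra ::
  "('k::field \<Rightarrow> 'a::ab_group_add \<Rightarrow> 'a) \<Rightarrow> ('a \<Rightarrow> 'a \<Rightarrow> 'a) \<Rightarrow> (nat \<Rightarrow> 'a set) \<Rightarrow> bool" where
  "complete_filtered_Lie_algebra sm br F \<longleftrightarrow>
     K_vector_space sm \<and>
     (\<forall>x y z. br (x + y) z = br x z + br y z) \<and>
     (\<forall>x y z. br x (y + z) = br x y + br x z) \<and>
     (\<forall>c x y. br (sm c x) y = sm c (br x y) \<and> br x (sm c y) = sm c (br x y)) \<and>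
     (\<forall>x. br x x = 0) \<and>
     (\<forall>x y z. br x (br y z) + br y (br z x) + br z (br x y) = 0) \<and>
     complete_filtration sm F \<and>
     (\<forall>m n. \<forall>x\<in>F m. \<forall>y\<in>F n. br x y \<in> F (m + n))"

definition K_linear :: "('k::field \<Rightarrow> 'a::ab_group_add \<Rightarrow> 'a) \<Rightarrow> ('a \<Rightarrow> 'a) \<Rightarrow> bool" where
  "K_linear sm Q \<longleftrightarrow> (\<forall>x y. Q (x + y) = Q x + Q y) \<and> (\<forall>c x. Q (sm c x) = sm c (Q x))"

definition filtration_preserving :: "(nat \<Rightarrow> 'a set) \<Rightarrow> ('a \<Rightarrow> 'a) \<Rightarrow> bool" where
  "filtration_preserving F Q \<longleftrightarrow> (\<forall>n. \<forall>x\<in>F n. Q x \<in> F n)"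

definition flim :: "(nat \<Rightarrow> 'a::ab_group_add set) \<Rightarrow> (nat \<Rightarrow> 'a) \<Rightarrow> 'a \<Rightarrow> bool" where
  "flim F s L \<longleftrightarrow> (\<forall>m. \<exists>N. \<forall>n\<ge>N. s n - L \<in> F m)"

definition fsum :: "(nat \<Rightarrow> 'a::ab_group_add set) \<Rightarrow> (nat \<Rightarrow> 'a) \<Rightarrow> 'a" where
  "fsum F f = (THE L. flim F (\<lambda>n. \<Sum>i<n. f i) L)"

text \<open>pw x n = x^(n+1) (no unit needed).\<close>
primrec pw :: "'a::times \<Rightarrow> nat \<Rightarrow> 'a" where
  "pw x 0 = x"
| "pw x (Suc n) = x * pw x n"

text \<open>expm1 x = exp(x) - 1 = sum_{n>=1} x^n/n!. Since exp(x) = 1 + expm1 x (in the unitization),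
  exp(x) exp(y) = 1 + expm1 x + expm1 y + expm1 x * expm1 y.\<close>
definition expm1 :: "('k::field_char_0 \<Rightarrow> 'a::ring \<Rightarrow> 'a) \<Rightarrow> (nat \<Rightarrow> 'a set) \<Rightarrow> 'a \<Rightarrow> 'a" where
  "expm1 sm F x = fsum F (\<lambda>n. sm (inverse (of_nat (fact (Suc n)))) (pw x n))"

definition expprod_m1 :: "('k::field_char_0 \<Rightarrow> 'a::ring \<Rightarrow> 'a) \<Rightarrow> (nat \<Rightarrow> 'a set) \<Rightarrow> 'a \<Rightarrow> 'a \<Rightarrow> 'a" where
  "expprod_m1 sm F x y = expm1 sm F x + expm1 sm F y + expm1 sm F x * expm1 sm F y"

text \<open>BCH(x,y) for x, y in A_1: the element z of A_1 with exp(x) exp(y) = exp(x + y + z).\<close>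
definition assoc_BCH :: "('k::field_char_0 \<Rightarrow> 'a::ring \<Rightarrow> 'a) \<Rightarrow> (nat \<Rightarrow> 'a set) \<Rightarrow> 'a \<Rightarrow> 'a \<Rightarrow> 'a" where
  "assoc_BCH sm F x y = (THE z. z \<in> F 1 \<and> expm1 sm F (x + y + z) = expprod_m1 sm F x y)"

text \<open>Right-nested bracket of a word in the letters x (True) and y (False):
  [w1 w2 ... wk] = [w1,[w2,[...,wk]]].\<close>
fun lie_word :: "('a::zero \<Rightarrow> 'a \<Rightarrow> 'a) \<Rightarrow> 'a \<Rightarrow> 'a \<Rightarrow> bool list \<Rightarrow> 'a" where
  "lie_word br x y [] = 0"
| "lie_word br x y [b] = (if b then x else y)"
| "lie_word br x y (b # c # w) = br (if b then x else y) (lie_word br x y (c # w))"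

text \<open>Homogeneous component of total degree N of Dynkin's series for log(exp x exp y):
  sum over n and (r_i,s_i) with r_i+s_i>0, sum (r_i+s_i) = N of
  (-1)^(n-1)/(n N prod r_i! s_i!) [x^r1 y^s1 ... x^rn y^sn].\<close>
definition dynkin_deg :: "('k::field_char_0 \<Rightarrow> 'a::ab_group_add \<Rightarrow> 'a) \<Rightarrow> ('a \<Rightarrow> 'a \<Rightarrow> 'a) \<Rightarrow> 'a \<Rightarrow> 'a \<Rightarrow> nat \<Rightarrow> 'a" where
  "dynkin_deg sm br x y N =
     (\<Sum>n\<in>{1..N}. \<Sum>ps\<in>{ps :: (nat \<times> nat) list. length ps = n \<and> (\<forall>p\<in>set ps. 0 < fst p + snd p)
                         \<and> sum_list (map (\<lambda>p. fst p + snd p) ps) = N}.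
        sm ((- 1) ^ (n - 1) / (of_nat n * of_nat N *
              of_nat (prod_list (map (\<lambda>p. fact (fst p) * fact (snd p)) ps))))
           (lie_word br x y (concat (map (\<lambda>p. replicate (fst p) True @ replicate (snd p) False) ps))))"

definition Lie_BCH :: "('k::field_char_0 \<Rightarrow> 'a::ab_group_add \<Rightarrow> 'a) \<Rightarrow> ('a \<Rightarrow> 'a \<Rightarrow> 'a) \<Rightarrow> (nat \<Rightarrow> 'a set) \<Rightarrow> 'a \<Rightarrow> 'a \<Rightarrow> 'a" where
  "Lie_BCH sm br F x y = fsum F (\<lambda>N. dynkin_deg sm br x y (Suc N)) - x - y"

definition Cop :: "('a \<Rightarrow> 'a \<Rightarrow> 'a) \<Rightarrow> 'a::ab_group_add \<Rightarrow> 'a \<Rightarrow> 'a" where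
  "Cop bch u v = u + v + bch u v"

definition bch_chi :: "(nat \<Rightarrow> 'a::ab_group_add set) \<Rightarrow> ('a \<Rightarrow> 'a \<Rightarrow> 'a) \<Rightarrow> ('a \<Rightarrow> 'a) \<Rightarrow> 'a \<Rightarrow> 'a" where
  "bch_chi F bch Q a = (THE b. b \<in> F 1 \<and> b = a - bch (Q b) (b - Q b))"

definition compl_proj :: "('a \<Rightarrow> 'a) \<Rightarrow> 'a::ab_group_add \<Rightarrow> 'a" where
  "compl_proj P x = x - P x"

definition A1_minus :: "(nat \<Rightarrow> 'a set) \<Rightarrow> ('a \<Rightarrow> 'a) \<Rightarrow> 'a set" where
  "A1_minus F P = P ` F 1"

definition A1_plus :: "(nat \<Rightarrow> 'a::ab_group_add set) \<Rightarrow> ('a \<Rightarrow> 'a) \<Rightarrow> 'a set" where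
  "A1_plus F P = compl_proj P ` F 1"

end

(*
  Everything rests on one contraction principle: a map T of A_1 such that a - b in A_n
  implies T a - T b in A_(n+1) has a unique fixed point, by completeness. Both BCH series
  have no terms of degree below two, so b |-> a - BCH(P b, b - P b) is such a contraction
  and chi is well defined. For u in A_(1,-) and v in A_(1,+) the fixed point for
  a = C(u, v) is u + v, while the fixed point equation itself says that
  C(P (chi a), (1 - P) (chi a)) = a; so C_- and D_P are inverse bijections. Applied to 1 - P
  this shows that C is also bijective on A_(1,+) x A_(1,-), with chi~^(-1)(a_+ + a_-) =
  C(a_+, a_-). Since exp(a_+) exp(a_-) = exp(C(a_+, a_-)) and exp is injective on A_1
  (again by a contraction argument), Psi = D_P o C is forced.
*)

theory Submission
  imports Defs
begin

section \<open>Contractions of a complete filtration\<close>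

definition filtration_contraction :: "(nat \<Rightarrow> 'a::ab_group_add set) \<Rightarrow> ('a \<Rightarrow> 'a) \<Rightarrow> bool" where
  "filtration_contraction F T \<longleftrightarrow> (\<forall>b\<in>F 1. T b \<in> F 1) \<and>
     (\<forall>n\<ge>1. \<forall>b\<in>F 1. \<forall>b'\<in>F 1. b - b' \<in> F n \<longrightarrow> T b - T b' \<in> F (Suc n))"

locale complete_filtered_group =
  fixes F :: "nat \<Rightarrow> 'a::ab_group_add set"
  assumes filtration_0: "F 0 = UNIV"
    and filtration_Suc_subset: "F (Suc n) \<subseteq> F n"
    and zero_mem: "0 \<in> F n"
    and add_mem: "x \<in> F n \<Longrightarrow> y \<in> F n \<Longrightarrow> x + y \<in> F n"
    and uminus_mem: "x \<in> F n \<Longrightarrow> - x \<in> F n"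
    and Inter_filtration: "(\<Inter>n. F n) = {0}"
    and filtration_complete: "(\<forall>n. s (Suc n) - s n \<in> F n) \<Longrightarrow> \<exists>x. \<forall>n. x - s n \<in> F n"
begin

lemma diff_mem: "x \<in> F n \<Longrightarrow> y \<in> F n \<Longrightarrow> x - y \<in> F n"
  using add_mem[of x n "- y"] uminus_mem[of y n] by simp

lemma filtration_antimono: "m \<le> n \<Longrightarrow> F n \<subseteq> F m"
  by (induction n rule: dec_induct) (use filtration_Suc_subset in blast)+

lemma filtration_mem_mono: "m \<le> n \<Longrightarrow> x \<in> F n \<Longrightarrow> x \<in> F m"
  using filtration_antimono by blast

lemma sum_mem: "(\<And>i. i \<in> A \<Longrightarrow> f i \<in> F n) \<Longrightarrow> sum f A \<in> F n"
  by (induction A rule: infinite_finite_induct) (auto simp: zero_mem add_mem)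

lemma eq_0_if_mem_all: "(\<And>n. x \<in> F n) \<Longrightarrow> x = 0"
  using Inter_filtration by blast

lemma eq_0_by_degree_induct:
  assumes "x \<in> F 1" and "\<And>n. n \<ge> 1 \<Longrightarrow> x \<in> F n \<Longrightarrow> x \<in> F (Suc n)"
  shows "x = 0"
proof (rule eq_0_if_mem_all)
  show "x \<in> F n" for n
  proof (induction n)
    case 0
    then show ?case using filtration_0 by simp
  next
    case (Suc n)
    then show ?case using assms by (cases "n = 0") auto
  qed
qed

lemma contraction_fixpoint_unique:
  assumes "filtration_contraction F T" "b \<in> F 1" "b' \<in> F 1" "T b = b" "T b' = b'"
  shows "b = b'"
proof -
  have "b - b' = 0"
  proof (rule eq_0_by_degree_induct)
    show "b - b' \<in> F 1" using assms diff_mem by blast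
  next
    fix n assume "n \<ge> 1" "b - b' \<in> F n"
    then show "b - b' \<in> F (Suc n)"
      using assms unfolding filtration_contraction_def by metis
  qed
  then show ?thesis by simp
qed

lemma contraction_iterate_mem:
  assumes "filtration_contraction F T"
  shows "(T ^^ k) 0 \<in> F 1"
proof (induction k)
  case 0
  then show ?case by (simp add: zero_mem)
next
  case (Suc k)
  then show ?case using assms unfolding filtration_contraction_def by simp
qed

lemma contraction_iterate_step:
  assumes "filtration_contraction F T"
  shows "(T ^^ Suc k) 0 - (T ^^ k) 0 \<in> F (Suc k)"
proof (induction k)
  case 0
  then show ?case using assms zero_mem unfolding filtration_contraction_def by simp
next
  case (Suc k)
  then show ?case
    using assms contraction_iterate_mem[OF assms] unfolding filtration_contraction_def by simp
qed

lemma contraction_fixpoint_exists: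
  assumes T: "filtration_contraction F T"
  shows "\<exists>b\<in>F 1. T b = b"
proof -
  have into: "T b \<in> F 1" if "b \<in> F 1" for b
    using T that unfolding filtration_contraction_def by blast
  have contr: "T b - T b' \<in> F (Suc n)" if "n \<ge> 1" "b \<in> F 1" "b' \<in> F 1" "b - b' \<in> F n" for n b b'
    using T that unfolding filtration_contraction_def by blast
  define s where "s k = (T ^^ k) 0" for k
  have s_mem: "s k \<in> F 1" for k
    unfolding s_def by (rule contraction_iterate_mem[OF T])
  obtain x where x: "\<And>n. x - s n \<in> F n"
    using filtration_complete[of s] contraction_iterate_step[OF T] filtration_Suc_subset
    unfolding s_def by blast
  have x_mem: "x \<in> F 1" using add_mem[OF x[of 1] s_mem[of 1]] by simp
  have "T x - x \<in> F (Suc n)" if "n \<ge> 1" for n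
  proof -
    have "T x - T (s n) \<in> F (Suc n)" by (rule contr) (use that x x_mem s_mem in auto)
    moreover have "T (s n) - x \<in> F (Suc n)" using uminus_mem[OF x[of "Suc n"]] by (simp add: s_def)
    ultimately show ?thesis using add_mem by fastforce
  qed
  then have "T x - x = 0"
    by (intro eq_0_by_degree_induct) (use into[OF x_mem] x_mem diff_mem in auto)
  then show ?thesis using x_mem by auto
qed

lemma contraction_unique_fixpoint:
  assumes "filtration_contraction F T"
  shows "\<exists>!b. b \<in> F 1 \<and> b = T b"
proof -
  obtain b where b: "b \<in> F 1" "T b = b" using contraction_fixpoint_exists[OF assms] ..
  show ?thesis
  proof (rule ex1I[of _ b])
    show "b \<in> F 1 \<and> b = T b" using b by simp
    fix b' assume "b' \<in> F 1 \<and> b' = T b'"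
    then show "b' = b" using contraction_fixpoint_unique[OF assms] b by metis
  qed
qed

lemma flim_unique:
  assumes "flim F s L" "flim F s L'"
  shows "L = L'"
proof -
  have "L' - L \<in> F m" for m
  proof -
    obtain N where N: "\<And>n. n \<ge> N \<Longrightarrow> s n - L \<in> F m \<and> s n - L' \<in> F m"
      using assms unfolding flim_def by (metis (full_types) max.boundedE)
    have "L' - L = (s N - L) - (s N - L')" by simp
    also have "\<dots> \<in> F m" using N[of N] by (blast intro: diff_mem)
    finally show ?thesis .
  qed
  then show ?thesis using eq_0_if_mem_all[of "L' - L"] by simp
qed

lemma fsum_eqI: "flim F (\<lambda>n. \<Sum>i<n. f i) L \<Longrightarrow> fsum F f = L"
  unfolding fsum_def using flim_unique by blast

lemma flim_fsum:
  assumes "\<And>i. f i \<in> F i"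
  shows "flim F (\<lambda>n. \<Sum>i<n. f i) (fsum F f)"
proof -
  obtain x where x: "\<And>n. x - (\<Sum>i<n. f i) \<in> F n"
    using filtration_complete[of "\<lambda>n. \<Sum>i<n. f i"] assms by auto
  have "flim F (\<lambda>n. \<Sum>i<n. f i) x"
    unfolding flim_def using filtration_mem_mono uminus_mem[OF x] by (metis minus_diff_eq)
  then show ?thesis using fsum_eqI by simp
qed

lemma fsum_zero: "fsum F (\<lambda>_. 0) = 0"
  by (rule fsum_eqI) (simp add: flim_def zero_mem)

lemma fsum_diff_mem:
  assumes f: "\<And>i. f i \<in> F i" and g: "\<And>i. g i \<in> F i"
    and fg: "\<And>i. i \<ge> 1 \<Longrightarrow> f i - g i \<in> F m"
  shows "fsum F f - fsum F g - (f 0 - g 0) \<in> F m"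
proof -
  obtain N where N: "(\<Sum>i<Suc N. f i) - fsum F f \<in> F m" "(\<Sum>i<Suc N. g i) - fsum F g \<in> F m"
    using flim_fsum[OF f] flim_fsum[OF g] unfolding flim_def by (metis le_Suc_eq max.cobounded1 max.cobounded2)
  have tail: "(\<Sum>i<N. f (Suc i) - g (Suc i)) \<in> F m" by (rule sum_mem) (use fg in auto)
  have "fsum F f - fsum F g - (f 0 - g 0)
      = (\<Sum>i<N. f (Suc i) - g (Suc i)) - ((\<Sum>i<Suc N. f i) - fsum F f) + ((\<Sum>i<Suc N. g i) - fsum F g)"
    unfolding sum.lessThan_Suc_shift sum_subtractf by (simp add: algebra_simps)
  also have "\<dots> \<in> F m" using N tail add_mem diff_mem by blast
  finally show ?thesis .
qed

end

section \<open>The BCH recursion and factorization\<close>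

definition bch_decomposition ::
  "(nat \<Rightarrow> 'a::ab_group_add set) \<Rightarrow> ('a \<Rightarrow> 'a \<Rightarrow> 'a) \<Rightarrow> ('a \<Rightarrow> 'a) \<Rightarrow> 'a \<Rightarrow> 'a \<times> 'a" where
  "bch_decomposition F B P a = (P (bch_chi F B P a), compl_proj P (bch_chi F B P a))"

text \<open>\<open>B\<close> stands for either BCH series. All that is used about it is that it has no terms of
  degree below two, in the form of \<open>bch_diff_mem\<close>.\<close>
locale bch_recursion = complete_filtered_group F for F :: "nat \<Rightarrow> 'a::ab_group_add set" +
  fixes B :: "'a \<Rightarrow> 'a \<Rightarrow> 'a" and P :: "'a \<Rightarrow> 'a"
  assumes bch_mem: "x \<in> F 1 \<Longrightarrow> y \<in> F 1 \<Longrightarrow> B x y \<in> F 1"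
    and bch_diff_mem: "n \<ge> 1 \<Longrightarrow> x \<in> F 1 \<Longrightarrow> y \<in> F 1 \<Longrightarrow> x' \<in> F 1 \<Longrightarrow> y' \<in> F 1
      \<Longrightarrow> x - x' \<in> F n \<Longrightarrow> y - y' \<in> F n \<Longrightarrow> B x y - B x' y' \<in> F (Suc n)"
    and proj_add: "P (x + y) = P x + P y"
    and proj_idem: "P (P x) = P x"
    and proj_mem: "x \<in> F n \<Longrightarrow> P x \<in> F n"
begin

abbreviation chi :: "'a \<Rightarrow> 'a" where
  "chi \<equiv> bch_chi F B P"

lemma proj_diff: "P (x - y) = P x - P y"
  using proj_add[of "x - y" y] by (simp add: eq_diff_eq)

lemma Cop_mem: "u \<in> F 1 \<Longrightarrow> v \<in> F 1 \<Longrightarrow> Cop B u v \<in> F 1"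
  unfolding Cop_def by (intro add_mem bch_mem)

lemma bch_chi_unique:
  assumes a: "a \<in> F 1"
  shows "\<exists>!b. b \<in> F 1 \<and> b = a - B (P b) (b - P b)"
proof (rule contraction_unique_fixpoint, unfold filtration_contraction_def, safe)
  show "a - B (P b) (b - P b) \<in> F 1" if "b \<in> F 1" for b
    using that a bch_mem proj_mem diff_mem by blast
next
  fix n b b' assume n: "n \<ge> 1" and b: "b \<in> F 1" "b' \<in> F 1" "b - b' \<in> F n"
  have "P b - P b' \<in> F n" using b proj_mem proj_diff by metis
  moreover have "b - P b - (b' - P b') = (b - b') - (P b - P b')" by (simp add: algebra_simps)
  ultimately have "b - P b - (b' - P b') \<in> F n" using b diff_mem by metis
  with \<open>P b - P b' \<in> F n\<close> have "B (P b) (b - P b) - B (P b') (b' - P b') \<in> F (Suc n)"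
    by (intro bch_diff_mem) (use n b proj_mem diff_mem in auto)
  then show "a - B (P b) (b - P b) - (a - B (P b') (b' - P b')) \<in> F (Suc n)"
    using uminus_mem by fastforce
qed

lemma bch_chi_mem: "a \<in> F 1 \<Longrightarrow> chi a \<in> F 1"
  and bch_chi_eq: "a \<in> F 1 \<Longrightarrow> chi a = a - B (P (chi a)) (chi a - P (chi a))"
  unfolding bch_chi_def using theI'[OF bch_chi_unique] by blast+

lemma bch_chi_eqI: "a \<in> F 1 \<Longrightarrow> b \<in> F 1 \<Longrightarrow> b = a - B (P b) (b - P b) \<Longrightarrow> chi a = b"
  unfolding bch_chi_def using the1_equality[OF bch_chi_unique] by blast

lemma bch_chi_add_bch: "a \<in> F 1 \<Longrightarrow> chi a + B (P (chi a)) (chi a - P (chi a)) = a"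
  by (rule eq_diff_eq[THEN iffD1, OF bch_chi_eq])

lemma inj_on_bch_chi: "inj_on chi (F 1)"
  by (rule inj_onI) (metis bch_chi_add_bch)

lemma A1_minusD: "u \<in> A1_minus F P \<Longrightarrow> u \<in> F 1 \<and> P u = u"
  unfolding A1_minus_def using proj_mem proj_idem by auto

lemma A1_plusD: "v \<in> A1_plus F P \<Longrightarrow> v \<in> F 1 \<and> P v = 0"
  unfolding A1_plus_def compl_proj_def using proj_mem proj_idem diff_mem proj_diff by auto

lemma bch_chi_Cop:
  assumes "u \<in> A1_minus F P" "v \<in> A1_plus F P"
  shows "chi (Cop B u v) = u + v"
proof (rule bch_chi_eqI)
  show "Cop B u v \<in> F 1" "u + v \<in> F 1"
    using assms A1_minusD A1_plusD Cop_mem add_mem by blast+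
  have "P (u + v) = u" using assms A1_minusD A1_plusD proj_add by simp
  then show "u + v = Cop B u v - B (P (u + v)) (u + v - P (u + v))"
    by (simp add: Cop_def)
qed


lemma Cop_bch_decomposition:
  "a \<in> F 1 \<Longrightarrow> Cop B (fst (bch_decomposition F B P a)) (snd (bch_decomposition F B P a)) = a"
  using bch_chi_add_bch[of a] by (simp add: bch_decomposition_def compl_proj_def Cop_def)

lemma bch_decomposition_mem: "a \<in> F 1 \<Longrightarrow> bch_decomposition F B P a \<in> A1_minus F P \<times> A1_plus F P"
  unfolding bch_decomposition_def A1_minus_def A1_plus_def using bch_chi_mem by blast

lemma bch_decomposition_Cop:
  "u \<in> A1_minus F P \<Longrightarrow> v \<in> A1_plus F P \<Longrightarrow> bch_decomposition F B P (Cop B u v) = (u, v)"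
  using A1_minusD A1_plusD by (simp add: bch_decomposition_def bch_chi_Cop compl_proj_def proj_add)

lemma Cop_mem_of_A1: "(u, v) \<in> A1_minus F P \<times> A1_plus F P \<Longrightarrow> Cop B u v \<in> F 1"
  using A1_minusD A1_plusD Cop_mem by blast

lemma bij_betw_Cop: "bij_betw (\<lambda>(u, v). Cop B u v) (A1_minus F P \<times> A1_plus F P) (F 1)"
  and bij_betw_bch_decomposition: "bij_betw (bch_decomposition F B P) (F 1) (A1_minus F P \<times> A1_plus F P)"
proof -
  have "\<forall>x\<in>A1_minus F P \<times> A1_plus F P. bch_decomposition F B P ((\<lambda>(u, v). Cop B u v) x) = x"
    using bch_decomposition_Cop by fast
  moreover have "\<forall>a\<in>F 1. (\<lambda>(u, v). Cop B u v) (bch_decomposition F B P a) = a"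
    using Cop_bch_decomposition by (simp add: split_beta)
  moreover have "(\<lambda>(u, v). Cop B u v) ` (A1_minus F P \<times> A1_plus F P) \<subseteq> F 1"
    using Cop_mem_of_A1 by fast
  moreover have "bch_decomposition F B P ` F 1 \<subseteq> A1_minus F P \<times> A1_plus F P"
    using bch_decomposition_mem by blast
  ultimately show "bij_betw (\<lambda>(u, v). Cop B u v) (A1_minus F P \<times> A1_plus F P) (F 1)"
    and "bij_betw (bch_decomposition F B P) (F 1) (A1_minus F P \<times> A1_plus F P)"
    by (blast intro: bij_betw_byWitness)+
qed

lemma the_inv_into_Cop:
  assumes "a \<in> F 1"
  shows "the_inv_into (A1_minus F P \<times> A1_plus F P) (\<lambda>(u, v). Cop B u v) a = bch_decomposition F B P a"
  using bij_betw_imp_inj_on[OF bij_betw_Cop] Cop_bch_decomposition[OF assms] bch_decomposition_mem[OF assms]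
  by (intro the_inv_into_f_eq) (simp_all add: split_beta)

lemma bch_recursion_compl_proj: "bch_recursion F B (compl_proj P)"
proof unfold_locales
  show "compl_proj P (x + y) = compl_proj P x + compl_proj P y" for x y
    by (simp add: compl_proj_def proj_add)
  show "compl_proj P (compl_proj P x) = compl_proj P x" for x
    by (simp add: compl_proj_def proj_diff proj_idem)
  show "compl_proj P x \<in> F n" if "x \<in> F n" for n x
    unfolding compl_proj_def using that by (intro diff_mem proj_mem)
qed (fact bch_mem bch_diff_mem)+

lemma A1_minus_compl_proj: "A1_minus F (compl_proj P) = A1_plus F P"
  by (simp add: A1_minus_def A1_plus_def)

lemma A1_plus_compl_proj: "A1_plus F (compl_proj P) = A1_minus F P"
proof -
  have "compl_proj (compl_proj P) = P" by (simp add: compl_proj_def fun_eq_iff)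
  then show ?thesis by (simp add: A1_minus_def A1_plus_def)
qed

lemma the_inv_into_bch_chi_compl_proj:
  assumes "ap \<in> A1_plus F P" "am \<in> A1_minus F P"
  shows "the_inv_into (F 1) (bch_chi F B (compl_proj P)) (ap + am) = Cop B ap am"
proof -
  interpret compl: bch_recursion F B "compl_proj P" by (rule bch_recursion_compl_proj)
  show ?thesis
    using assms compl.inj_on_bch_chi compl.bch_chi_Cop compl.Cop_mem_of_A1
    by (intro the_inv_into_f_eq) (simp_all add: A1_minus_compl_proj A1_plus_compl_proj)
qed

lemma bij_betw_Cop_swapped: "bij_betw (\<lambda>(u, v). Cop B u v) (A1_plus F P \<times> A1_minus F P) (F 1)"
  using bch_recursion.bij_betw_Cop[OF bch_recursion_compl_proj]
  by (simp add: A1_minus_compl_proj A1_plus_compl_proj)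

lemma uniformization_unique:
  assumes E: "inj_on E (F 1)" and R: "\<And>u v. u \<in> F 1 \<Longrightarrow> v \<in> F 1 \<Longrightarrow> R u v = E (Cop B u v)"
    and ap: "ap \<in> A1_plus F P" and am: "am \<in> A1_minus F P"
    and uv: "(u, v) \<in> A1_minus F P \<times> A1_plus F P" and eq: "R ap am = R u v"
  shows "(u, v) = bch_decomposition F B P (Cop B ap am)"
proof -
  have "ap \<in> F 1" "am \<in> F 1" "u \<in> F 1" "v \<in> F 1"
    using ap am uv A1_minusD A1_plusD by auto
  then have "E (Cop B ap am) = E (Cop B u v)" using eq R by simp
  then have "Cop B u v = Cop B ap am"
    using inj_onD[OF E] \<open>ap \<in> F 1\<close> \<open>am \<in> F 1\<close> \<open>u \<in> F 1\<close> \<open>v \<in> F 1\<close> Cop_mem by metis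
  then show ?thesis using bch_decomposition_Cop uv by (metis mem_Sigma_iff)
qed

lemma R_bch_decomposition_Cop:
  assumes R: "\<And>u v. u \<in> F 1 \<Longrightarrow> v \<in> F 1 \<Longrightarrow> R u v = E (Cop B u v)"
    and "u \<in> F 1" "v \<in> F 1"
  shows "R u v = R (fst (bch_decomposition F B P (Cop B u v))) (snd (bch_decomposition F B P (Cop B u v)))"
proof -
  have a: "Cop B u v \<in> F 1" using assms(2,3) by (rule Cop_mem)
  then have "fst (bch_decomposition F B P (Cop B u v)) \<in> F 1" "snd (bch_decomposition F B P (Cop B u v)) \<in> F 1"
    using bch_decomposition_mem A1_minusD A1_plusD by (simp_all add: mem_Times_iff)
  then show ?thesis using R assms(2,3) Cop_bch_decomposition[OF a] by simp
qed

text \<open>\<open>R u v\<close> plays the role of the product \<open>exp u exp v\<close>, which is determined by \<open>C u v\<close> through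
  an injective \<open>E\<close>: \<open>E = exp - 1\<close> in the associative case, \<open>R = C\<close> and \<open>E = id\<close> in the Lie case.\<close>
lemma uniformization:
  assumes E: "inj_on E (F 1)" and R: "\<And>u v. u \<in> F 1 \<Longrightarrow> v \<in> F 1 \<Longrightarrow> R u v = E (Cop B u v)"
  shows "\<exists>\<Psi>. bij_betw \<Psi> (A1_plus F P \<times> A1_minus F P) (A1_minus F P \<times> A1_plus F P)
    \<and> (\<forall>ap\<in>A1_plus F P. \<forall>am\<in>A1_minus F P. R ap am = R (fst (\<Psi> (ap, am))) (snd (\<Psi> (ap, am))))
    \<and> (\<forall>\<Phi>. bij_betw \<Phi> (A1_plus F P \<times> A1_minus F P) (A1_minus F P \<times> A1_plus F P)
          \<and> (\<forall>ap\<in>A1_plus F P. \<forall>am\<in>A1_minus F P. R ap am = R (fst (\<Phi> (ap, am))) (snd (\<Phi> (ap, am))))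
          \<longrightarrow> (\<forall>a\<in>A1_plus F P \<times> A1_minus F P. \<Phi> a = \<Psi> a))
    \<and> (\<forall>ap\<in>A1_plus F P. \<forall>am\<in>A1_minus F P.
          \<Psi> (ap, am) = bch_decomposition F B P (Cop B ap am)
        \<and> \<Psi> (ap, am) = bch_decomposition F B P (the_inv_into (F 1) (bch_chi F B (compl_proj P)) (ap + am)))"
proof (intro exI conjI)
  let ?\<Psi> = "bch_decomposition F B P \<circ> (\<lambda>(u, v). Cop B u v)"
  show bij: "bij_betw ?\<Psi> (A1_plus F P \<times> A1_minus F P) (A1_minus F P \<times> A1_plus F P)"
    using bij_betw_Cop_swapped bij_betw_bch_decomposition by (rule bij_betw_trans)
  show "\<forall>ap\<in>A1_plus F P. \<forall>am\<in>A1_minus F P. R ap am = R (fst (?\<Psi> (ap, am))) (snd (?\<Psi> (ap, am)))"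
    using R_bch_decomposition_Cop[where R = R and E = E, OF R] A1_minusD A1_plusD by simp
  show "\<forall>\<Phi>. bij_betw \<Phi> (A1_plus F P \<times> A1_minus F P) (A1_minus F P \<times> A1_plus F P)
          \<and> (\<forall>ap\<in>A1_plus F P. \<forall>am\<in>A1_minus F P. R ap am = R (fst (\<Phi> (ap, am))) (snd (\<Phi> (ap, am))))
          \<longrightarrow> (\<forall>a\<in>A1_plus F P \<times> A1_minus F P. \<Phi> a = ?\<Psi> a)"
  proof (intro allI impI ballI, elim conjE)
    fix \<Phi> a
    assume \<Phi>: "bij_betw \<Phi> (A1_plus F P \<times> A1_minus F P) (A1_minus F P \<times> A1_plus F P)"
      and R\<Phi>: "\<forall>ap\<in>A1_plus F P. \<forall>am\<in>A1_minus F P. R ap am = R (fst (\<Phi> (ap, am))) (snd (\<Phi> (ap, am)))"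
      and a: "a \<in> A1_plus F P \<times> A1_minus F P"
    obtain ap am where "a = (ap, am)" "ap \<in> A1_plus F P" "am \<in> A1_minus F P" using a by blast
    then show "\<Phi> a = ?\<Psi> a"
      using uniformization_unique[OF E R, of ap am "fst (\<Phi> a)" "snd (\<Phi> a)"] bij_betw_apply[OF \<Phi> a] R\<Phi>
      by simp
  qed
  show "\<forall>ap\<in>A1_plus F P. \<forall>am\<in>A1_minus F P. ?\<Psi> (ap, am) = bch_decomposition F B P (Cop B ap am)
        \<and> ?\<Psi> (ap, am) = bch_decomposition F B P (the_inv_into (F 1) (bch_chi F B (compl_proj P)) (ap + am))"
    using the_inv_into_bch_chi_compl_proj by simp
qed

end

lemma (in complete_filtered_group) bch_recursionI:
  assumes "\<And>x y. x \<in> F 1 \<Longrightarrow> y \<in> F 1 \<Longrightarrow> B x y \<in> F 1"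
    and "\<And>n x y x' y'. n \<ge> 1 \<Longrightarrow> x \<in> F 1 \<Longrightarrow> y \<in> F 1 \<Longrightarrow> x' \<in> F 1 \<Longrightarrow> y' \<in> F 1
      \<Longrightarrow> x - x' \<in> F n \<Longrightarrow> y - y' \<in> F n \<Longrightarrow> B x y - B x' y' \<in> F (Suc n)"
    and "K_linear sm P" "\<forall>x. P (P x) = P x" "filtration_preserving F P"
  shows "bch_recursion F B P"
  using assms unfolding K_linear_def filtration_preserving_def
  by unfold_locales blast+

section \<open>Exponential and BCH in a complete filtered ring\<close>

locale complete_filtered_space =
  fixes sm :: "'k::field \<Rightarrow> 'a::ab_group_add \<Rightarrow> 'a" and F :: "nat \<Rightarrow> 'a set"
  assumes vector_space: "K_vector_space sm" and filtration: "complete_filtration sm F"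
begin

lemma scale_add_right: "sm c (x + y) = sm c x + sm c y"
  and scale_add_left: "sm (c + d) x = sm c x + sm d x"
  and scale_one: "sm 1 x = x"
  using vector_space unfolding K_vector_space_def by blast+

lemma scale_zero_right: "sm c 0 = 0"
  using scale_add_right[of c 0 0] by simp

lemma scale_diff_right: "sm c (x - y) = sm c x - sm c y"
  using scale_add_right[of c "x - y" y] by (simp add: eq_diff_eq)

lemma scale_minus_one: "sm (- 1) x = - x"
proof -
  have "sm 0 x = 0" using scale_add_left[of 0 0 x] by simp
  then have "sm (- 1) x + x = 0" using scale_add_left[of "- 1" 1 x] scale_one by simp
  then show ?thesis by (simp add: eq_neg_iff_add_eq_0)
qed

lemma scale_mem: "x \<in> F n \<Longrightarrow> sm c x \<in> F n"
  using filtration unfolding complete_filtration_def by (elim conjE) blast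

end

sublocale complete_filtered_space \<subseteq> complete_filtered_group F
proof
  show "- x \<in> F n" if "x \<in> F n" for n x
    using scale_mem[OF that, of "- 1"] scale_minus_one by simp
qed (use filtration in \<open>simp_all add: complete_filtration_def\<close>)

locale complete_filtered_ring = complete_filtered_space sm F
  for sm :: "'k::field_char_0 \<Rightarrow> 'a::ring \<Rightarrow> 'a" and F +
  assumes mult_mem: "x \<in> F m \<Longrightarrow> y \<in> F n \<Longrightarrow> x * y \<in> F (m + n)"

lemma complete_filtered_ring_if_assoc_algebra:
  "complete_filtered_assoc_algebra sm F \<Longrightarrow> complete_filtered_ring sm F"
  unfolding complete_filtered_assoc_algebra_def complete_filtered_ring_def
    complete_filtered_ring_axioms_def complete_filtered_space_def
  by blast

context complete_filtered_ring
begin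

lemma pw_mem: "x \<in> F 1 \<Longrightarrow> pw x k \<in> F (Suc k)"
proof (induction k)
  case (Suc k)
  then show ?case using mult_mem[of x 1 "pw x k" "Suc k"] by simp
qed simp

lemma pw_diff_mem:
  assumes "x \<in> F 1" "x' \<in> F 1" "x - x' \<in> F n"
  shows "pw x k - pw x' k \<in> F (n + k)"
proof (induction k)
  case 0
  then show ?case using assms by simp
next
  case (Suc k)
  have "pw x (Suc k) - pw x' (Suc k) = (x - x') * pw x k + x' * (pw x k - pw x' k)"
    by (simp add: algebra_simps)
  moreover have "(x - x') * pw x k \<in> F (n + Suc k)"
    using mult_mem[OF assms(3) pw_mem[OF assms(1)]] by simp
  moreover have "x' * (pw x k - pw x' k) \<in> F (n + Suc k)"
    using mult_mem[OF assms(2) Suc] by simp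
  ultimately show ?case using add_mem by simp
qed

lemma pw_zero: "pw (0::'a) k = 0"
  by (induction k) auto

lemma expm1_diff_mem:
  assumes "n \<ge> 1" "x \<in> F 1" "x' \<in> F 1" "x - x' \<in> F n"
  shows "expm1 sm F x - expm1 sm F x' - (x - x') \<in> F (Suc n)"
proof -
  define t where "t = (\<lambda>y i. sm (inverse (of_nat (fact (Suc i)))) (pw y i))"
  have t_mem: "t y i \<in> F i" if "y \<in> F 1" for y i
    unfolding t_def using scale_mem pw_mem[OF that] filtration_Suc_subset by blast
  have "fsum F (t x) - fsum F (t x') - (t x 0 - t x' 0) \<in> F (Suc n)"
  proof (rule fsum_diff_mem)
    fix i :: nat assume "i \<ge> 1"
    have "t x i - t x' i \<in> F (n + i)"
      unfolding t_def scale_diff_right[symmetric] using scale_mem pw_diff_mem assms by blast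
    then show "t x i - t x' i \<in> F (Suc n)"
      using filtration_mem_mono[of "Suc n" "n + i"] \<open>i \<ge> 1\<close> by simp
  qed (use t_mem assms in auto)
  moreover have "expm1 sm F y = fsum F (t y)" "t y 0 = y" for y
    by (simp_all add: expm1_def t_def scale_one)
  ultimately show ?thesis by simp
qed

lemma expm1_0: "expm1 sm F 0 = 0"
  unfolding expm1_def pw_zero scale_zero_right by (rule fsum_zero)

lemma expm1_mem: "x \<in> F 1 \<Longrightarrow> expm1 sm F x \<in> F 1"
  using expm1_diff_mem[of 1 x 0] add_mem[of "expm1 sm F x - x" 1 x] filtration_Suc_subset
  by (auto simp: expm1_0 zero_mem)

lemma diff_mem_if_expm1_diff_mem:
  assumes "z \<in> F 1" "z' \<in> F 1" "expm1 sm F z - expm1 sm F z' \<in> F n"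
  shows "z - z' \<in> F n"
  using assms(3)
proof (induction n)
  case 0
  then show ?case using filtration_0 by simp
next
  case (Suc n)
  show ?case
  proof (cases "n = 0")
    case True
    then show ?thesis using assms diff_mem by simp
  next
    case False
    then have "z - z' \<in> F n" using Suc filtration_Suc_subset by blast
    then have "expm1 sm F z - expm1 sm F z' - (z - z') \<in> F (Suc n)"
      using False assms by (intro expm1_diff_mem) auto
    then show ?thesis using diff_mem[OF Suc.prems] by fastforce
  qed
qed

lemma inj_on_expm1: "inj_on (expm1 sm F) (F 1)"
proof (rule inj_onI)
  fix z z' assume "z \<in> F 1" "z' \<in> F 1" "expm1 sm F z = expm1 sm F z'"
  then have "z - z' \<in> F n" for n
    using diff_mem_if_expm1_diff_mem[of z z' n] zero_mem[of n] by simp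
  then show "z = z'" using eq_0_if_mem_all[of "z - z'"] by simp
qed

lemma expm1_onto:
  assumes "w \<in> F 1"
  shows "\<exists>z\<in>F 1. expm1 sm F z = w"
proof -
  have "filtration_contraction F (\<lambda>z. w - (expm1 sm F z - z))"
    unfolding filtration_contraction_def
  proof (intro conjI ballI allI impI)
    show "w - (expm1 sm F b - b) \<in> F 1" if "b \<in> F 1" for b
      using assms that expm1_mem diff_mem by blast
    fix n b b' assume "n \<ge> 1" "b \<in> F 1" "b' \<in> F 1" "b - b' \<in> F n"
    then have "- (expm1 sm F b - expm1 sm F b' - (b - b')) \<in> F (Suc n)"
      using expm1_diff_mem uminus_mem by blast
    then show "w - (expm1 sm F b - b) - (w - (expm1 sm F b' - b')) \<in> F (Suc n)"
      by (simp add: algebra_simps)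
  qed
  then obtain z where "z \<in> F 1" "w - (expm1 sm F z - z) = z"
    using contraction_fixpoint_exists by blast
  then show ?thesis by (auto simp: diff_eq_eq)
qed

lemma expprod_m1_mem:
  assumes "x \<in> F 1" "y \<in> F 1"
  shows "expprod_m1 sm F x y \<in> F 1"
proof -
  have "expm1 sm F x * expm1 sm F y \<in> F (1 + 1)"
    using mult_mem expm1_mem assms by blast
  then have "expm1 sm F x * expm1 sm F y \<in> F 1"
    by (rule filtration_mem_mono[rotated]) simp
  then show ?thesis unfolding expprod_m1_def using add_mem expm1_mem assms by blast
qed

lemma assoc_BCH_unique:
  assumes "x \<in> F 1" "y \<in> F 1"
  shows "\<exists>!z. z \<in> F 1 \<and> expm1 sm F (x + y + z) = expprod_m1 sm F x y"
proof -
  obtain u where u: "u \<in> F 1" "expm1 sm F u = expprod_m1 sm F x y"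
    using expm1_onto expprod_m1_mem assms by blast
  show ?thesis
  proof (rule ex1I[of _ "u - x - y"])
    show "u - x - y \<in> F 1 \<and> expm1 sm F (x + y + (u - x - y)) = expprod_m1 sm F x y"
      using u assms diff_mem by simp
    fix z assume z: "z \<in> F 1 \<and> expm1 sm F (x + y + z) = expprod_m1 sm F x y"
    then have "x + y + z \<in> F 1" using assms add_mem by blast
    moreover have "expm1 sm F (x + y + z) = expm1 sm F u" using z u by simp
    ultimately have "x + y + z = u" using inj_onD[OF inj_on_expm1] u by blast
    then show "z = u - x - y" by (simp add: algebra_simps)
  qed
qed

lemma assoc_BCH_mem: "x \<in> F 1 \<Longrightarrow> y \<in> F 1 \<Longrightarrow> assoc_BCH sm F x y \<in> F 1"
  and expm1_assoc_BCH:
    "x \<in> F 1 \<Longrightarrow> y \<in> F 1 \<Longrightarrow> expm1 sm F (x + y + assoc_BCH sm F x y) = expprod_m1 sm F x y"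
  unfolding assoc_BCH_def by (metis (no_types, lifting) theI'[OF assoc_BCH_unique])+

lemma expprod_m1_eq_expm1_Cop:
  "x \<in> F 1 \<Longrightarrow> y \<in> F 1 \<Longrightarrow> expprod_m1 sm F x y = expm1 sm F (Cop (assoc_BCH sm F) x y)"
  by (simp add: Cop_def expm1_assoc_BCH)

lemma expprod_m1_diff_mem:
  assumes "n \<ge> 1" "x \<in> F 1" "y \<in> F 1" "x' \<in> F 1" "y' \<in> F 1" "x - x' \<in> F n" "y - y' \<in> F n"
  shows "(expprod_m1 sm F x y - x - y) - (expprod_m1 sm F x' y' - x' - y') \<in> F (Suc n)"
proof -
  let ?e = "expm1 sm F"
  have ex: "?e x - ?e x' - (x - x') \<in> F (Suc n)" and ey: "?e y - ?e y' - (y - y') \<in> F (Suc n)"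
    using expm1_diff_mem assms by auto
  have "?e x - ?e x' \<in> F n" using add_mem[OF assms(6) filtration_mem_mono[OF _ ex]] by simp
  then have "(?e x - ?e x') * ?e y \<in> F (Suc n)" using mult_mem expm1_mem[OF assms(3)] by fastforce
  moreover have "?e y - ?e y' \<in> F n" using add_mem[OF assms(7) filtration_mem_mono[OF _ ey]] by simp
  then have "?e x' * (?e y - ?e y') \<in> F (Suc n)" using mult_mem expm1_mem[OF assms(4)] by fastforce
  moreover have "(expprod_m1 sm F x y - x - y) - (expprod_m1 sm F x' y' - x' - y')
     = (?e x - ?e x' - (x - x')) + (?e y - ?e y' - (y - y')) + ((?e x - ?e x') * ?e y + ?e x' * (?e y - ?e y'))"
    unfolding expprod_m1_def by (simp add: algebra_simps)
  ultimately show ?thesis using ex ey add_mem by metis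
qed

lemma assoc_BCH_diff_mem:
  assumes "n \<ge> 1" "x \<in> F 1" "y \<in> F 1" "x' \<in> F 1" "y' \<in> F 1" "x - x' \<in> F n" "y - y' \<in> F n"
  shows "assoc_BCH sm F x y - assoc_BCH sm F x' y' \<in> F (Suc n)"
proof -
  let ?E = "expprod_m1 sm F"
  define z z' where "z = Cop (assoc_BCH sm F) x y" and "z' = Cop (assoc_BCH sm F) x' y'"
  have z_mem: "z \<in> F 1" "z' \<in> F 1"
    unfolding z_def z'_def Cop_def by (intro add_mem assoc_BCH_mem assms(2-5))+
  have ez: "expm1 sm F z = ?E x y" "expm1 sm F z' = ?E x' y'"
    unfolding z_def z'_def using expprod_m1_eq_expm1_Cop assms by simp_all
  have R: "(?E x y - x - y) - (?E x' y' - x' - y') \<in> F (Suc n)"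
    using expprod_m1_diff_mem assms by blast
  have "?E x y - ?E x' y' = ((?E x y - x - y) - (?E x' y' - x' - y')) + (x - x') + (y - y')"
    by (simp add: algebra_simps)
  also have "\<dots> \<in> F n"
    using filtration_mem_mono[OF _ R] assms by (intro add_mem) auto
  finally have "z - z' \<in> F n"
    using diff_mem_if_expm1_diff_mem[OF z_mem] unfolding ez by blast
  then have "expm1 sm F z - expm1 sm F z' - (z - z') \<in> F (Suc n)"
    using expm1_diff_mem assms z_mem by blast
  moreover have "assoc_BCH sm F x y - assoc_BCH sm F x' y'
      = ((?E x y - x - y) - (?E x' y' - x' - y')) - (expm1 sm F z - expm1 sm F z' - (z - z'))"
    unfolding ez by (simp add: z_def z'_def Cop_def algebra_simps)
  ultimately show ?thesis using diff_mem[OF R] by metis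
qed

lemma assoc_bch_recursion:
  assumes "K_linear sm P" "\<forall>x. P (P x) = P x" "filtration_preserving F P"
  shows "bch_recursion F (assoc_BCH sm F) P"
proof (rule bch_recursionI[OF _ _ assms])
  show "assoc_BCH sm F x y \<in> F 1" if "x \<in> F 1" "y \<in> F 1" for x y
    using that by (rule assoc_BCH_mem)
  show "assoc_BCH sm F x y - assoc_BCH sm F x' y' \<in> F (Suc n)"
    if "n \<ge> 1" "x \<in> F 1" "y \<in> F 1" "x' \<in> F 1" "y' \<in> F 1" "x - x' \<in> F n" "y - y' \<in> F n"
    for n x y x' y'
    using that by (rule assoc_BCH_diff_mem)
qed

end

section \<open>Dynkin's BCH series for a complete filtered bracket\<close>

locale complete_filtered_bracket = complete_filtered_space sm F
  for sm :: "'k::field_char_0 \<Rightarrow> 'a::ab_group_add \<Rightarrow> 'a" and F +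
  fixes br :: "'a \<Rightarrow> 'a \<Rightarrow> 'a"
  assumes bracket_add_left: "br (x + y) z = br x z + br y z"
    and bracket_add_right: "br x (y + z) = br x y + br x z"
    and bracket_mem: "x \<in> F m \<Longrightarrow> y \<in> F n \<Longrightarrow> br x y \<in> F (m + n)"

lemma complete_filtered_bracket_if_Lie_algebra:
  "complete_filtered_Lie_algebra sm br F \<Longrightarrow> complete_filtered_bracket sm F br"
  unfolding complete_filtered_Lie_algebra_def complete_filtered_bracket_def
    complete_filtered_bracket_axioms_def complete_filtered_space_def
  by (elim conjE) (intro conjI; blast)

definition dynkin_word :: "(nat \<times> nat) list \<Rightarrow> bool list" where
  "dynkin_word ps = concat (map (\<lambda>p. replicate (fst p) True @ replicate (snd p) False) ps)"

lemma length_dynkin_word: "length (dynkin_word ps) = sum_list (map (\<lambda>p. fst p + snd p) ps)"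
  by (induction ps) (auto simp: dynkin_word_def)

context complete_filtered_bracket
begin

lemma bracket_diff_left: "br (x - y) z = br x z - br y z"
  using bracket_add_left[of "x - y" y z] by (simp add: eq_diff_eq)

lemma bracket_diff_right: "br x (y - z) = br x y - br x z"
  using bracket_add_right[of x "y - z" z] by (simp add: eq_diff_eq)

lemma lie_word_mem:
  assumes "x \<in> F 1" "y \<in> F 1"
  shows "w \<noteq> [] \<Longrightarrow> lie_word br x y w \<in> F (length w)"
proof (induction w rule: induct_list012)
  case (3 b c w)
  have "(if b then x else y) \<in> F 1" using assms by simp
  from bracket_mem[OF this 3(2)] show ?case by simp
qed (use assms in simp_all)

lemma lie_word_diff_mem:
  assumes "x \<in> F 1" "y \<in> F 1" "x' \<in> F 1" "y' \<in> F 1" "x - x' \<in> F n" "y - y' \<in> F n"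
  shows "w \<noteq> [] \<Longrightarrow> lie_word br x y w - lie_word br x' y' w \<in> F (n + length w - 1)"
proof (induction w rule: induct_list012)
  case (3 b c w)
  let ?a = "if b then x else y" and ?a' = "if b then x' else y'"
  let ?u = "lie_word br x y (c # w)" and ?u' = "lie_word br x' y' (c # w)"
  have "br (?a - ?a') ?u \<in> F (n + length (c # w))"
    using assms lie_word_mem[OF assms(1,2), of "c # w"] by (intro bracket_mem) auto
  moreover have "br ?a' (?u - ?u') \<in> F (1 + (n + length (c # w) - 1))"
    using assms 3 by (intro bracket_mem) auto
  ultimately have "br (?a - ?a') ?u + br ?a' (?u - ?u') \<in> F (n + length (b # c # w) - 1)"
    using add_mem by simp
  then show ?case by (simp add: bracket_diff_left bracket_diff_right)
qed (use assms in simp_all)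

lemma dynkin_deg_mem:
  assumes "x \<in> F 1" "y \<in> F 1" "N \<ge> 1"
  shows "dynkin_deg sm br x y N \<in> F N"
  unfolding dynkin_deg_def dynkin_word_def[symmetric]
proof (intro sum_mem scale_mem)
  fix ps n assume "ps \<in> {ps :: (nat \<times> nat) list. length ps = n \<and> (\<forall>p\<in>set ps. 0 < fst p + snd p)
                         \<and> sum_list (map (\<lambda>p. fst p + snd p) ps) = N}"
  then have len: "length (dynkin_word ps) = N" by (simp add: length_dynkin_word)
  with assms(3) have "dynkin_word ps \<noteq> []" by auto
  from lie_word_mem[OF assms(1,2) this] show "lie_word br x y (dynkin_word ps) \<in> F N"
    unfolding len .
qed

lemma dynkin_deg_diff_mem:
  assumes "x \<in> F 1" "y \<in> F 1" "x' \<in> F 1" "y' \<in> F 1" "x - x' \<in> F n" "y - y' \<in> F n" "N \<ge> 1"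
  shows "dynkin_deg sm br x y N - dynkin_deg sm br x' y' N \<in> F (n + N - 1)"
  unfolding dynkin_deg_def dynkin_word_def[symmetric] sum_subtractf[symmetric] scale_diff_right[symmetric]
proof (intro sum_mem scale_mem)
  fix ps m assume "ps \<in> {ps :: (nat \<times> nat) list. length ps = m \<and> (\<forall>p\<in>set ps. 0 < fst p + snd p)
                         \<and> sum_list (map (\<lambda>p. fst p + snd p) ps) = N}"
  then have len: "length (dynkin_word ps) = N" by (simp add: length_dynkin_word)
  with assms(7) have "dynkin_word ps \<noteq> []" by auto
  from lie_word_diff_mem[OF assms(1-6) this]
  show "lie_word br x y (dynkin_word ps) - lie_word br x' y' (dynkin_word ps) \<in> F (n + N - 1)"
    unfolding len .
qed

lemma dynkin_deg_1: "dynkin_deg sm br x y (Suc 0) = x + y"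
proof -
  have "{ps :: (nat \<times> nat) list. length ps = 1 \<and> (\<forall>p\<in>set ps. 0 < fst p + snd p)
      \<and> sum_list (map (\<lambda>p. fst p + snd p) ps) = 1} = {[(1, 0)], [(0, 1)]}"
  proof (intro set_eqI iffI)
    fix ps :: "(nat \<times> nat) list"
    assume "ps \<in> {ps. length ps = 1 \<and> (\<forall>p\<in>set ps. 0 < fst p + snd p)
      \<and> sum_list (map (\<lambda>p. fst p + snd p) ps) = 1}"
    then obtain a b where "ps = [(a, b)]" "a + b = 1"
      by (auto simp: length_Suc_conv)
    then show "ps \<in> {[(1, 0)], [(0, 1)]}" by (cases a) auto
  qed auto
  then show ?thesis unfolding dynkin_deg_def by (simp add: scale_one)
qed

lemma Lie_BCH_mem:
  assumes "x \<in> F 1" "y \<in> F 1"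
  shows "Lie_BCH sm br F x y \<in> F 1"
proof -
  let ?f = "\<lambda>N. dynkin_deg sm br x y (Suc N)"
  have f_mem: "?f i \<in> F (Suc i)" for i using dynkin_deg_mem[OF assms] by simp
  have "fsum F ?f - fsum F (\<lambda>_. 0) - (?f 0 - 0) \<in> F 1"
  proof (rule fsum_diff_mem)
    show "?f i - 0 \<in> F 1" if "i \<ge> 1" for i
      using filtration_mem_mono[OF _ f_mem[of i]] by simp
  qed (use f_mem filtration_Suc_subset zero_mem in auto)
  then show ?thesis unfolding Lie_BCH_def fsum_zero by (simp add: dynkin_deg_1 diff_diff_eq)
qed

lemma Lie_BCH_diff_mem:
  assumes "n \<ge> 1" "x \<in> F 1" "y \<in> F 1" "x' \<in> F 1" "y' \<in> F 1" "x - x' \<in> F n" "y - y' \<in> F n"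
  shows "Lie_BCH sm br F x y - Lie_BCH sm br F x' y' \<in> F (Suc n)"
proof -
  let ?f = "\<lambda>N. dynkin_deg sm br x y (Suc N)" and ?g = "\<lambda>N. dynkin_deg sm br x' y' (Suc N)"
  have "fsum F ?f - fsum F ?g - (?f 0 - ?g 0) \<in> F (Suc n)"
  proof (rule fsum_diff_mem)
    show "?f i \<in> F i" "?g i \<in> F i" for i
      using dynkin_deg_mem[OF assms(2,3), of "Suc i"] dynkin_deg_mem[OF assms(4,5), of "Suc i"]
        filtration_Suc_subset by auto
    show "?f i - ?g i \<in> F (Suc n)" if "i \<ge> 1" for i
      using dynkin_deg_diff_mem[OF assms(2-7), of "Suc i"] filtration_mem_mono[of "Suc n" "n + i"] that
      by simp
  qed
  then show ?thesis unfolding Lie_BCH_def by (simp add: dynkin_deg_1 algebra_simps)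
qed

lemma Lie_bch_recursion:
  assumes "K_linear sm P" "\<forall>x. P (P x) = P x" "filtration_preserving F P"
  shows "bch_recursion F (Lie_BCH sm br F) P"
proof (rule bch_recursionI[OF _ _ assms])
  show "Lie_BCH sm br F x y \<in> F 1" if "x \<in> F 1" "y \<in> F 1" for x y
    using that by (rule Lie_BCH_mem)
  show "Lie_BCH sm br F x y - Lie_BCH sm br F x' y' \<in> F (Suc n)"
    if "n \<ge> 1" "x \<in> F 1" "y \<in> F 1" "x' \<in> F 1" "y' \<in> F 1" "x - x' \<in> F n" "y - y' \<in> F n"
    for n x y x' y'
    using that by (rule Lie_BCH_diff_mem)
qed

end

theorem theorem2p4:
  fixes sm :: "'k::field_char_0 \<Rightarrow> 'a::ring \<Rightarrow> 'a" and F :: "nat \<Rightarrow> 'a set" and P :: "'a \<Rightarrow> 'a"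
    and smL :: "'k \<Rightarrow> 'b::ab_group_add \<Rightarrow> 'b" and br :: "'b \<Rightarrow> 'b \<Rightarrow> 'b"
    and G :: "nat \<Rightarrow> 'b set" and Q :: "'b \<Rightarrow> 'b"
  shows
  "(complete_filtered_assoc_algebra sm F \<and> K_linear sm P \<and> (\<forall>x. P (P x) = P x)
      \<and> filtration_preserving F P \<longrightarrow>
    (let B = assoc_BCH sm F; Pt = compl_proj P; Am = A1_minus F P; Ap = A1_plus F P;
         Cm = (\<lambda>(u, v). Cop B u v); chi = bch_chi F B P; chit = bch_chi F B Pt
     in bij_betw Cm (Am \<times> Ap) (F 1)
      \<and> (\<forall>a\<in>F 1. the_inv_into (Am \<times> Ap) Cm a = (P (chi a), Pt (chi a)))
      \<and> (\<exists>\<Psi>. bij_betw \<Psi> (Ap \<times> Am) (Am \<times> Ap)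
           \<and> (\<forall>ap\<in>Ap. \<forall>am\<in>Am. expprod_m1 sm F ap am
                 = expprod_m1 sm F (fst (\<Psi> (ap, am))) (snd (\<Psi> (ap, am))))
           \<and> (\<forall>\<Phi>. bij_betw \<Phi> (Ap \<times> Am) (Am \<times> Ap)
                 \<and> (\<forall>ap\<in>Ap. \<forall>am\<in>Am. expprod_m1 sm F ap am
                       = expprod_m1 sm F (fst (\<Phi> (ap, am))) (snd (\<Phi> (ap, am))))
                 \<longrightarrow> (\<forall>a\<in>Ap \<times> Am. \<Phi> a = \<Psi> a))
           \<and> (\<forall>ap\<in>Ap. \<forall>am\<in>Am.
                 \<Psi> (ap, am) = (P (chi (Cop B ap am)), Pt (chi (Cop B ap am)))
               \<and> \<Psi> (ap, am) = (P (chi (the_inv_into (F 1) chit (ap + am))),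
                                Pt (chi (the_inv_into (F 1) chit (ap + am))))))))
   \<and>
   (complete_filtered_Lie_algebra smL br G \<and> K_linear smL Q \<and> (\<forall>x. Q (Q x) = Q x)
      \<and> filtration_preserving G Q \<longrightarrow>
    (let B = Lie_BCH smL br G; Pt = compl_proj Q; Am = A1_minus G Q; Ap = A1_plus G Q;
         Cm = (\<lambda>(u, v). Cop B u v); chi = bch_chi G B Q; chit = bch_chi G B Pt
     in bij_betw Cm (Am \<times> Ap) (G 1)
      \<and> (\<forall>a\<in>G 1. the_inv_into (Am \<times> Ap) Cm a = (Q (chi a), Pt (chi a)))
      \<and> (\<exists>\<Psi>. bij_betw \<Psi> (Ap \<times> Am) (Am \<times> Ap)
           \<and> (\<forall>ap\<in>Ap. \<forall>am\<in>Am. Cop B ap am = Cop B (fst (\<Psi> (ap, am))) (snd (\<Psi> (ap, am))))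
           \<and> (\<forall>\<Phi>. bij_betw \<Phi> (Ap \<times> Am) (Am \<times> Ap)
                 \<and> (\<forall>ap\<in>Ap. \<forall>am\<in>Am. Cop B ap am = Cop B (fst (\<Phi> (ap, am))) (snd (\<Phi> (ap, am))))
                 \<longrightarrow> (\<forall>a\<in>Ap \<times> Am. \<Phi> a = \<Psi> a))
           \<and> (\<forall>ap\<in>Ap. \<forall>am\<in>Am.
                 \<Psi> (ap, am) = (Q (chi (Cop B ap am)), Pt (chi (Cop B ap am)))
               \<and> \<Psi> (ap, am) = (Q (chi (the_inv_into (G 1) chit (ap + am))),
                                Pt (chi (the_inv_into (G 1) chit (ap + am))))))))"
  apply (intro conjI impI)
  subgoal premises assoc
  proof -
    interpret complete_filtered_ring sm F
      using assoc by (blast intro: complete_filtered_ring_if_assoc_algebra)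
    interpret bch_recursion F "assoc_BCH sm F" P
      using assoc by (blast intro: assoc_bch_recursion)
    show ?thesis
      unfolding Let_def bch_decomposition_def[symmetric]
      using uniformization[OF inj_on_expm1 expprod_m1_eq_expm1_Cop]
      by (intro conjI ballI bij_betw_Cop the_inv_into_Cop)
  qed
  subgoal premises Lie
  proof -
    interpret complete_filtered_bracket smL G br
      using Lie by (blast intro: complete_filtered_bracket_if_Lie_algebra)
    interpret bch_recursion G "Lie_BCH smL br G" Q
      using Lie by (blast intro: Lie_bch_recursion)
    show ?thesis
      unfolding Let_def bch_decomposition_def[symmetric]
      using uniformization[where E = "\<lambda>x. x" and R = "Cop (Lie_BCH smL br G)"]
      by (intro conjI ballI bij_betw_Cop the_inv_into_Cop) simp_all
  qed
  done

end
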